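(* Let $X$ be a CAT(0) space, $T:X\to X$, $C\subseteq X$ nonempty and $\varphi:[0,\infty)\to[0,\infty)$ an increasing function vanishing only at $0$. If $T$ is uniformly $(P_2)$ on $C$ with modulus $\varphi$, then for all $x\in C$ and all $z\in C\cap Fix(T)$, $\varphi(d(Tx,z))\le d(x,Tx)\,d(Tx,z)$.
   Context: A geodesic space $(X,d)$ is CAT(0) if for all $z\in X$, all geodesics $\gamma:[a,b]\to X$ and all $t\in[0,1]$, $d^2(z,\gamma((1-t)a+tb))\le(1-t)d^2(z,\gamma(a))+td^2(z,\gamma(b))-t(1-t)d^2(\gamma(a),\gamma(b))$. $T$ is uniformly $(P_2)$ on $C$ with modulus $\varphi$ if $T(C)\subseteq C$ and for all $x,y\in C$: $2d^2(Tx,Ty)\le d^2(x,Ty)+d^2(y,Tx)-d^2(x,Tx)-d^2(y,Ty)-2\varphi(d(Tx,Ty))$. $Fix(T)$ is the fixed point set of $T$. *)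

theory Defs
  imports "HOL-Analysis.Analysis"
begin

definition geodesic_in :: "'a::metric_space set \<Rightarrow> real \<Rightarrow> real \<Rightarrow> (real \<Rightarrow> 'a) \<Rightarrow> bool" where
  "geodesic_in X a b \<gamma> \<longleftrightarrow> a \<le> b \<and> \<gamma> ` {a..b} \<subseteq> X \<and>
     (\<forall>s\<in>{a..b}. \<forall>t\<in>{a..b}. dist (\<gamma> s) (\<gamma> t) = \<bar>s - t\<bar>)"

definition geodesic_space :: "'a::metric_space set \<Rightarrow> bool" where
  "geodesic_space X \<longleftrightarrow> (\<forall>x\<in>X. \<forall>y\<in>X. \<exists>a b \<gamma>. geodesic_in X a b \<gamma> \<and> \<gamma> a = x \<and> \<gamma> b = y)"

definition CAT0 :: "'a::metric_space set \<Rightarrow> bool" where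
  "CAT0 X \<longleftrightarrow> geodesic_space X \<and>
     (\<forall>z\<in>X. \<forall>a b \<gamma>. geodesic_in X a b \<gamma> \<longrightarrow> (\<forall>t\<in>{0..1::real}.
        (dist z (\<gamma> ((1 - t) * a + t * b)))\<^sup>2
          \<le> (1 - t) * (dist z (\<gamma> a))\<^sup>2 + t * (dist z (\<gamma> b))\<^sup>2
             - t * (1 - t) * (dist (\<gamma> a) (\<gamma> b))\<^sup>2))"

definition uniformly_P2 :: "('a::metric_space \<Rightarrow> 'a) \<Rightarrow> 'a set \<Rightarrow> (real \<Rightarrow> real) \<Rightarrow> bool" where
  "uniformly_P2 T C \<phi> \<longleftrightarrow> T ` C \<subseteq> C \<and>
     (\<forall>x\<in>C. \<forall>y\<in>C. 2 * (dist (T x) (T y))\<^sup>2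
        \<le> (dist x (T y))\<^sup>2 + (dist y (T x))\<^sup>2 - (dist x (T x))\<^sup>2 - (dist y (T y))\<^sup>2
          - 2 * \<phi> (dist (T x) (T y)))"

definition Fix :: "('a \<Rightarrow> 'a) \<Rightarrow> 'a set" where
  "Fix T = {x. T x = x}"

end

theory Submission
  imports Defs
begin

text \<open>Taking y = z with T z = z in the (P2) inequality leaves
  2 d(Tx,z)^2 + 2 phi(d(Tx,z)) <= d(x,z)^2 - d(x,Tx)^2 + d(z,Tx)^2, and bounding d(x,z) by
  d(x,Tx) + d(Tx,z) gives the claim.\<close>

lemma uniformly_P2_modulus_le_at_fixed_point:
  fixes T :: "'a::metric_space \<Rightarrow> 'a"
  assumes "uniformly_P2 T C \<phi>" and "x \<in> C" and "z \<in> C" and "T z = z"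
  shows "\<phi> (dist (T x) z) \<le> dist x (T x) * dist (T x) z"
proof -
  have P2: "2 * (dist (T x) z)\<^sup>2 \<le> (dist x z)\<^sup>2 + (dist z (T x))\<^sup>2 - (dist x (T x))\<^sup>2
      - (dist z z)\<^sup>2 - 2 * \<phi> (dist (T x) z)"
    using assms unfolding uniformly_P2_def by metis
  have "(dist x z)\<^sup>2 \<le> (dist x (T x) + dist (T x) z)\<^sup>2"
    by (simp add: dist_triangle power_mono)
  with P2 show ?thesis
    by (simp add: dist_commute power2_eq_square algebra_simps)
qed

theorem lemma4p4:
  fixes X C :: "'a::metric_space set" and T :: "'a \<Rightarrow> 'a" and \<phi> :: "real \<Rightarrow> real"
  assumes "CAT0 X"
    and "T ` X \<subseteq> X"
    and "C \<subseteq> X" and "C \<noteq> {}"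
    and "\<phi> ` {0..} \<subseteq> {0..}"
    and "mono_on {0..} \<phi>"
    and "\<And>t. t \<ge> 0 \<Longrightarrow> \<phi> t = 0 \<longleftrightarrow> t = 0"
    and "uniformly_P2 T C \<phi>"
  shows "\<forall>x\<in>C. \<forall>z\<in>C \<inter> Fix T. \<phi> (dist (T x) z) \<le> dist x (T x) * dist (T x) z"
  using uniformly_P2_modulus_le_at_fixed_point[OF assms(8)] by (auto simp: Fix_def)

end
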